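(* Assume $W_{S,M}$ is a finite Weyl group, that $K=(k_{s,s'})$ is an integer matrix satisfying conditions (K), and that $e=\{s_+,s_-\}$ satisfies condition (B) with sequence $s_{j_0}=s_-,s_{j_1}=s_+,\dots,s_{j_n}$. Let $S'=S\setminus\{s_{j_n}\}$, $w=s_{j_1}\cdots s_{j_n}$, $\tau:W_{S'}\to W_{S/e,N}$ the isomorphism $\tau(s)=s$ for $s\notin\{s_{j_0},\dots,s_{j_n}\}$, $\tau(s_{j_\ell})=s_{j_{\ell+1}}$ ($1\le \ell\le n-1$), $\tau(s_{j_0})=s_0$, and $\sigma^1:V_{S',\mathbb Z}\to V_{S/e,\mathbb Z}$ given by $\alpha_s\mapsto\alpha_s$ for $s\notin\{s_{j_0},\dots,s_{j_n}\}$ and $\alpha_{s_{j_\ell}}\mapsto\sigma_{s_{j_1}}\cdots\sigma_{s_{j_n}}(\alpha_{s_{j_\ell}})$. Then $\sigma^1$ is a well-defined isomorphism of lattices, and for all $(\alpha,x)\in W^{\mathrm{aff}}_{S'}=V_{S',\mathbb Z}\rtimes W_{S'}$, \[ \phi^{\mathrm{aff}}(\sigma^1(\alpha),\tau(x))=(\sigma_w(\alpha),wxw^{-1})\in W^{\mathrm{aff}}_{S}. \]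
   Context: A Coxeter matrix on $S$ is a symmetric matrix $M=(m_{s,s'})$ with entries in $\mathbb Z_{\ge1}\sqcup\{\infty\}$, $m_{s,s'}=1$ iff $s=s'$; $W_{S,M}$ is generated by $S$ with relations $(ss')^{m_{s,s'}}=1$ for $m_{s,s'}\ne\infty$. Conditions (K) on a real matrix $K=(k_{s,s'})_{s,s'\in S}$: $k_{s,s}=-2$; $k_{s,s'}=0$ if $m_{s,s'}=2$; $k_{s,s'}>0$ if $m_{s,s'}\ge3$; $k_{s,s'}k_{s',s}=4\cos^2(\pi/m_{s,s'})$ if $m_{s,s'}\ne\infty$; $k_{s,s'}k_{s',s}\ge4$ if $m_{s,s'}=\infty$. Given $K$, $V_S=\bigoplus_{s\in S}\mathbb R\alpha_s$ and $\sigma_s(\alpha_{s'})=\alpha_{s'}+k_{s,s'}\alpha_s$ define a faithful representation $\sigma$ of $W_{S,M}$. When $K$ is integral, $V_{S,\mathbb Z}=\bigoplus_s\mathbb Z\alpha_s$ is stable and $W^{\mathrm{aff}}_{S}=V_{S,\mathbb Z}\rtimes W_{S,M}$ with product $(\alpha,x)(\beta,y)=(\alpha+\sigma_x\beta,xy)$. For $S'\subseteq S$, $W_{S'}$ is the subgroup generated by $S'$, $V_{S',\mathbb Z}=\bigoplus_{s\in S'}\mathbb Z\alpha_s$, and $W^{\mathrm{aff}}_{S'}=V_{S',\mathbb Z}\rtimes W_{S'}\subseteq W^{\mathrm{aff}}_S$. Edge contraction: $e=\{s_+,s_-\}$ with $m_{s_+,s_-}=3$; $S/e=(S\setminus\{s_+,s_-\})\sqcup\{s_0\}$;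 $N=(n_{s,s'})$ with $n_{s,s}=1$, $n_{s,s'}=m_{s,s'}$ for distinct $s,s'\ne s_0$, and for $s\ne s_0$: $n_{s,s_0}=m_{s,s_+}+m_{s,s_-}-2$ if $m_{s,s_+}=2$ or $m_{s,s_-}=2$, else $\infty$. $\phi:W_{S/e,N}\to W_{S,M}$ is $s\mapsto s$ ($s\ne s_0$), $s_0\mapsto s_+s_-s_+$. Put $\alpha_{s_0}=\alpha_{s_+}+\alpha_{s_-}$, $V_{S/e,\mathbb Z}=\bigoplus_{s\in S/e}\mathbb Z\alpha_s\subseteq V_{S,\mathbb Z}$, with $W_{S/e,N}$ acting by $\tilde\sigma_s(\alpha_{s'})=\alpha_{s'}+\tilde k_{s,s'}\alpha_s$, where $\tilde k_{s,s'}=k_{s,s'}$ for $s,s'\ne s_0$, $\tilde k_{s,s_0}=k_{s,s_+}+k_{s,s_-}$, $\tilde k_{s_0,s}=k_{s_+,s}+k_{s_-,s}$, $\tilde k_{s_0,s_0}=-2$. $W^{\mathrm{aff}}_{S/e}=V_{S/e,\mathbb Z}\rtimes W_{S/e,N}$ and $\phi^{\mathrm{aff}}(\alpha,x)=(\alpha,\phi(x))$. Condition (B): there exist $n\ge1$ and pairwise distinct $s_{j_0}=s_-,s_{j_1}=s_+,\dots,s_{j_n}\in S$ with $m_{s_{j_k},s_{j_{k+1}}}=3$ for $0\le k\le n-1$, and for every $1\le k\le n$ and every $s\in S$ different from $s_{j_k}$, $s_{j_{k-1}}$ and (if $k<n$) $s_{j_{k+1}}$, $m_{s_{j_k},s}=2$.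 *)

theory Defs
  imports Complex_Main "HOL-Library.Extended_Nat"
begin

definition coxeter_matrix :: "'a set \<Rightarrow> ('a \<Rightarrow> 'a \<Rightarrow> enat) \<Rightarrow> bool" where
  "coxeter_matrix S M \<longleftrightarrow>
     (\<forall>s\<in>S. \<forall>t\<in>S. M s t = M t s \<and> M s t \<ge> 1 \<and> (M s t = 1 \<longleftrightarrow> s = t))"

(* Words over S; the Coxeter group W_{S,M} is the set of words modulo the congruence
   generated by the relators (s s')^{m_{s,s'}} (m finite).  Since m_{s,s} = 1, s s = 1. *)
inductive cox_eq :: "'a set \<Rightarrow> ('a \<Rightarrow> 'a \<Rightarrow> enat) \<Rightarrow> 'a list \<Rightarrow> 'a list \<Rightarrow> bool"
  for S M where
  refl: "cox_eq S M w w"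
| rel: "s \<in> S \<Longrightarrow> t \<in> S \<Longrightarrow> M s t = enat m \<Longrightarrow>
        cox_eq S M (u @ concat (replicate m [s, t]) @ v) (u @ v)"
| sym: "cox_eq S M u v \<Longrightarrow> cox_eq S M v u"
| trans: "cox_eq S M u v \<Longrightarrow> cox_eq S M v w \<Longrightarrow> cox_eq S M u w"

definition coxeter_group :: "'a set \<Rightarrow> ('a \<Rightarrow> 'a \<Rightarrow> enat) \<Rightarrow> 'a list set set" where
  "coxeter_group S M =
     lists S // {(u, v). u \<in> lists S \<and> v \<in> lists S \<and> cox_eq S M u v}"

definition conditions_K :: "'a set \<Rightarrow> ('a \<Rightarrow> 'a \<Rightarrow> enat) \<Rightarrow> ('a \<Rightarrow> 'a \<Rightarrow> int) \<Rightarrow> bool" where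
  "conditions_K S M K \<longleftrightarrow>
     (\<forall>s\<in>S. K s s = -2) \<and>
     (\<forall>s\<in>S. \<forall>t\<in>S. M s t = 2 \<longrightarrow> K s t = 0) \<and>
     (\<forall>s\<in>S. \<forall>t\<in>S. M s t \<ge> 3 \<longrightarrow> K s t > 0) \<and>
     (\<forall>s\<in>S. \<forall>t\<in>S. \<forall>m::nat. M s t = enat m \<longrightarrow>
          real_of_int (K s t * K t s) = 4 * (cos (pi / real m))\<^sup>2) \<and>
     (\<forall>s\<in>S. \<forall>t\<in>S. M s t = \<infinity> \<longrightarrow> K s t * K t s \<ge> 4)"

definition lattice :: "'a set \<Rightarrow> ('a \<Rightarrow> int) set" where
  "lattice S = {v. \<forall>t. t \<notin> S \<longrightarrow> v t = 0}"

definition root :: "'a \<Rightarrow> 'a \<Rightarrow> int" where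
  "root s = (\<lambda>t. if t = s then 1 else 0)"

(* sigma_s(alpha_{s'}) = alpha_{s'} + k_{s,s'} alpha_s, extended linearly *)
definition refl_sigma :: "'a set \<Rightarrow> ('a \<Rightarrow> 'a \<Rightarrow> int) \<Rightarrow> 'a \<Rightarrow> ('a \<Rightarrow> int) \<Rightarrow> ('a \<Rightarrow> int)" where
  "refl_sigma S K s v = (\<lambda>t. v t + (if t = s then (\<Sum>u\<in>S. K s u * v u) else 0))"

definition sigma_word :: "'a set \<Rightarrow> ('a \<Rightarrow> 'a \<Rightarrow> int) \<Rightarrow> 'a list \<Rightarrow> ('a \<Rightarrow> int) \<Rightarrow> ('a \<Rightarrow> int)" where
  "sigma_word S K w = foldr (\<lambda>s f. refl_sigma S K s \<circ> f) w id"

(* S/e is modelled as  None (= s_0)  together with  Some s  for s \<in> S - {s_+, s_-} *)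
definition contracted_set :: "'a set \<Rightarrow> 'a \<Rightarrow> 'a \<Rightarrow> 'a option set" where
  "contracted_set S sp sm = insert None (Some ` (S - {sp, sm}))"

(* the inclusion V_{S/e,Z} \<subseteq> V_{S,Z}, with alpha_{s_0} = alpha_{s_+} + alpha_{s_-} *)
definition contr_emb :: "'a \<Rightarrow> 'a \<Rightarrow> ('a option \<Rightarrow> int) \<Rightarrow> ('a \<Rightarrow> int)" where
  "contr_emb sp sm b = (\<lambda>t. b (Some t) + (if t = sp \<or> t = sm then b None else 0))"

definition contracted_lattice :: "'a set \<Rightarrow> 'a \<Rightarrow> 'a \<Rightarrow> ('a \<Rightarrow> int) set" where
  "contracted_lattice S sp sm = contr_emb sp sm ` lattice (contracted_set S sp sm)"

definition phi_word :: "'a \<Rightarrow> 'a \<Rightarrow> 'a option list \<Rightarrow> 'a list" where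
  "phi_word sp sm y = concat (map (\<lambda>c. case c of None \<Rightarrow> [sp, sm, sp] | Some s \<Rightarrow> [s]) y)"

definition condition_B_seq :: "'a set \<Rightarrow> ('a \<Rightarrow> 'a \<Rightarrow> enat) \<Rightarrow> 'a \<Rightarrow> 'a \<Rightarrow> nat \<Rightarrow> (nat \<Rightarrow> 'a) \<Rightarrow> bool" where
  "condition_B_seq S M sp sm n j \<longleftrightarrow>
     n \<ge> 1 \<and> j 0 = sm \<and> j 1 = sp \<and> inj_on j {0..n} \<and> j ` {0..n} \<subseteq> S \<and>
     (\<forall>k<n. M (j k) (j (Suc k)) = 3) \<and>
     (\<forall>k\<in>{1..n}. \<forall>s\<in>S. s \<noteq> j k \<and> s \<noteq> j (k - 1) \<and> (k < n \<longrightarrow> s \<noteq> j (Suc k))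
          \<longrightarrow> M (j k) s = 2)"

definition sigma1 :: "'a set \<Rightarrow> ('a \<Rightarrow> 'a \<Rightarrow> int) \<Rightarrow> nat \<Rightarrow> (nat \<Rightarrow> 'a) \<Rightarrow> ('a \<Rightarrow> int) \<Rightarrow> ('a \<Rightarrow> int)" where
  "sigma1 S K n j a =
     (\<lambda>t. \<Sum>s\<in>S - {j n}. a s *
        (if s \<in> j ` {0..n} then sigma_word S K (map j [1..<Suc n]) (root s) t else root s t))"

end

theory Submission
  imports Defs
begin

text \<open>Since \<open>s\<^bsub>j n\<^esub>\<close> is excluded and every chain element meets only its neighbours,
  \<open>\<sigma>\<^sub>w = \<sigma>\<^bsub>j 1\<^esub> \<cdots> \<sigma>\<^bsub>j n\<^esub>\<close> acts on \<open>V\<^bsub>S',\<int>\<^esub>\<close> by moving the chain up one step: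
  \<open>\<alpha>\<^bsub>j m\<^esub> \<mapsto> \<alpha>\<^bsub>j (m+1)\<^esub>\<close> for \<open>0 < m < n\<close>, \<open>\<alpha>\<^bsub>j 0\<^esub> \<mapsto> \<alpha>\<^bsub>j 0\<^esub> + \<alpha>\<^bsub>j 1\<^esub> = \<alpha>\<^bsub>s\<^sub>0\<^esub>\<close>, all other roots fixed.
  This sends the basis of \<open>V\<^bsub>S',\<int>\<^esub>\<close> onto that of \<open>V\<^bsub>S/e,\<int>\<^esub>\<close>. In coordinates it is
  precomposition with the map lowering chain indices, which is computed one reflection at a time
  from the shape of \<open>K\<close> along the chain (entries \<open>-2\<close>, \<open>1\<close>, \<open>0\<close>). On the group side,
  conjugation by \<open>w\<close> fixes letters commuting with the chain, turns \<open>s\<^bsub>j m\<^esub>\<close> into \<open>s\<^bsub>j (m+1)\<^esub>\<close> by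
  one braid relation, and turns \<open>s\<^bsub>j 0\<^esub>\<close> into \<open>s\<^sub>+ s\<^sub>- s\<^sub>+\<close>; so \<open>w x w\<^sup>-\<^sup>1\<close> and
  \<open>\<phi>(\<tau> x)\<close> agree letter by letter.\<close>

section \<open>Relations in Coxeter groups\<close>

lemma cox_eq_context: "cox_eq S M u v \<Longrightarrow> cox_eq S M (a @ u @ b) (a @ v @ b)"
proof (induction rule: cox_eq.induct)
  case (rel s t m u v)
  then show ?case using cox_eq.rel[of s S t M m "a @ u" "v @ b"] by simp
qed (auto intro: cox_eq.intros)

lemma cox_eq_contextI:
  "cox_eq S M u v \<Longrightarrow> x = a @ u @ b \<Longrightarrow> y = a @ v @ b \<Longrightarrow> cox_eq S M x y"
  using cox_eq_context by blast

declare cox_eq.trans[trans]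

lemma cox_eq_append: "cox_eq S M u u' \<Longrightarrow> cox_eq S M v v' \<Longrightarrow> cox_eq S M (u @ v) (u' @ v')"
  by (metis append.right_neutral append_Nil cox_eq_context cox_eq.trans)

lemma cox_eq_commute_list:
  "\<forall>t\<in>set w. cox_eq S M [s, t] [t, s] \<Longrightarrow> cox_eq S M (s # w) (w @ [s])"
proof (induction w)
  case Nil
  then show ?case by (simp add: cox_eq.refl)
next
  case (Cons t w)
  have "cox_eq S M (s # t # w) (t # s # w)"
    by (rule cox_eq_contextI[of S M "[s, t]" "[t, s]" _ "[]" w]) (use Cons.prems in auto)
  also have "cox_eq S M (t # s # w) (t # w @ [s])"
    by (rule cox_eq_contextI[of S M "s # w" "w @ [s]" _ "[t]" "[]"]) (use Cons in auto)
  finally show ?case by simp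
qed

context
  fixes S :: "'a set" and M :: "'a \<Rightarrow> 'a \<Rightarrow> enat"
  assumes coxM: "coxeter_matrix S M"
begin

lemma cox_eq_square: "s \<in> S \<Longrightarrow> cox_eq S M [s, s] []"
  using cox_eq.rel[of s S s M 1 "[]" "[]"] coxM by (simp add: coxeter_matrix_def one_enat_def)

lemma cox_eq_commute:
  assumes "s \<in> S" "t \<in> S" "M s t = 2"
  shows "cox_eq S M [s, t] [t, s]"
proof -
  have "M s t = enat 2" using assms by (simp add: numeral_eq_enat)
  then have "cox_eq S M [s, t, s, t, t, s] [t, s]"
    using cox_eq.rel[of s S t M 2 "[]" "[t, s]"] assms(1,2) by (simp add: numeral_2_eq_2)
  moreover have "cox_eq S M [s, t, s, t, t, s] [s, t]"
  proof -
    have "cox_eq S M [s, t, s, t, t, s] [s, t, s, s]"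
      by (rule cox_eq_contextI[OF cox_eq_square[OF assms(2)], of _ "[s, t, s]" "[s]"]) auto
    also have "cox_eq S M [s, t, s, s] [s, t]"
      by (rule cox_eq_contextI[OF cox_eq_square[OF assms(1)], of _ "[s, t]" "[]"]) auto
    finally show ?thesis .
  qed
  ultimately show ?thesis by (meson cox_eq.sym cox_eq.trans)
qed

lemma cox_eq_braid3:
  assumes "s \<in> S" "t \<in> S" "M s t = 3"
  shows "cox_eq S M [s, t, s, t, s] [t]"
proof -
  have "M s t = enat 3" using assms by (simp add: numeral_eq_enat)
  then have "cox_eq S M [s, t, s, t, s, t, t] [t]"
    using cox_eq.rel[of s S t M 3 "[]" "[t]"] assms(1,2) by (simp add: numeral_3_eq_3)
  moreover have "cox_eq S M [s, t, s, t, s, t, t] [s, t, s, t, s]"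
    by (rule cox_eq_contextI[OF cox_eq_square[OF assms(2)], of _ "[s, t, s, t, s]" "[]"]) auto
  ultimately show ?thesis by (meson cox_eq.sym cox_eq.trans)
qed

lemma cox_eq_append_rev: "set w \<subseteq> S \<Longrightarrow> cox_eq S M (w @ rev w) []"
proof (induction w)
  case Nil
  then show ?case by (simp add: cox_eq.refl)
next
  case (Cons s w)
  have "cox_eq S M ((s # w) @ rev (s # w)) [s, s]"
    by (rule cox_eq_contextI[OF Cons.IH, of _ "[s]" "[s]"]) (use Cons.prems in auto)
  also have "cox_eq S M [s, s] []"
    using Cons.prems by (intro cox_eq_square) auto
  finally show ?case .
qed

lemma cox_eq_rev_append: "set w \<subseteq> S \<Longrightarrow> cox_eq S M (rev w @ w) []"
  using cox_eq_append_rev[of "rev w"] by simp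

lemma cox_eq_conj_commuting:
  assumes "set w \<subseteq> S" "\<forall>t\<in>set w. cox_eq S M [s, t] [t, s]"
  shows "cox_eq S M (w @ [s] @ rev w) [s]"
proof -
  have "cox_eq S M (w @ [s] @ rev w) (s # w @ rev w)"
    by (rule cox_eq_contextI[OF cox_eq.sym[OF cox_eq_commute_list[OF assms(2)]], of _ "[]" "rev w"]) auto
  also have "cox_eq S M (s # w @ rev w) [s]"
    by (rule cox_eq_contextI[OF cox_eq_append_rev[OF assms(1)], of _ "[s]" "[]"]) auto
  finally show ?thesis .
qed

lemma cox_eq_conj_braid:
  assumes "set A \<subseteq> S" "set B \<subseteq> S" "s \<in> S" "t \<in> S" "M s t = 3"
    and "\<forall>u\<in>set B. cox_eq S M [s, u] [u, s]" and "\<forall>u\<in>set A. cox_eq S M [t, u] [u, t]"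
  shows "cox_eq S M ((A @ [s, t] @ B) @ [s] @ rev (A @ [s, t] @ B)) [t]"
proof -
  have "cox_eq S M ((A @ [s, t] @ B) @ [s] @ rev (A @ [s, t] @ B))
      ((A @ [s, t]) @ (B @ [s] @ rev B) @ ([t, s] @ rev A))"
    by simp (rule cox_eq.refl)
  also have "cox_eq S M \<dots> ((A @ [s, t]) @ [s] @ ([t, s] @ rev A))"
    by (rule cox_eq_context[OF cox_eq_conj_commuting[OF assms(2,6)]])
  also have "cox_eq S M \<dots> (A @ [s, t, s, t, s] @ rev A)"
    by simp (rule cox_eq.refl)
  also have "cox_eq S M \<dots> (A @ [t] @ rev A)"
    by (rule cox_eq_context[OF cox_eq_braid3[OF assms(3-5)]])
  also have "cox_eq S M \<dots> [t]"
    by (rule cox_eq_conj_commuting[OF assms(1,7)])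
  finally show ?thesis .
qed

end

section \<open>The chain of condition (B)\<close>

lemma K_eq_1_if_M_eq_3:
  assumes "coxeter_matrix S M" "conditions_K S M K" "s \<in> S" "t \<in> S" "M s t = 3"
  shows "K s t = 1"
proof -
  have "M t s = 3" using assms by (metis coxeter_matrix_def)
  then have pos: "K s t > 0" "K t s > 0"
    using assms unfolding conditions_K_def by (metis order_refl)+
  have "M s t = enat 3" using assms by (simp add: numeral_eq_enat)
  then have "real_of_int (K s t * K t s) = 4 * (cos (pi / real 3))\<^sup>2"
    using assms unfolding conditions_K_def by blast
  also have "\<dots> = 1" by (simp add: cos_60 power2_eq_square)
  finally have "K s t * K t s = 1" by linarith
  then show ?thesis using pos pos_zmult_eq_1_iff by blast
qed

lemma contracted_lattice_eq:
  assumes "sp \<in> S" "sm \<in> S"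
  shows "contracted_lattice S sp sm = {v \<in> lattice S. v sp = v sm}"
proof
  show "contracted_lattice S sp sm \<subseteq> {v \<in> lattice S. v sp = v sm}"
  proof
    fix v assume "v \<in> contracted_lattice S sp sm"
    then obtain b where b: "b \<in> lattice (contracted_set S sp sm)" "v = contr_emb sp sm b"
      by (auto simp: contracted_lattice_def)
    have "b (Some t) = 0" if "t \<notin> S - {sp, sm}" for t
      using b(1) that by (auto simp: lattice_def contracted_set_def)
    then show "v \<in> {v \<in> lattice S. v sp = v sm}"
      using b(2) assms by (auto simp: contr_emb_def lattice_def)
  qed
next
  show "{v \<in> lattice S. v sp = v sm} \<subseteq> contracted_lattice S sp sm"
  proof
    fix v assume v: "v \<in> {v \<in> lattice S. v sp = v sm}"
    define b where
      "b x = (case x of None \<Rightarrow> v sp | Some t \<Rightarrow> if t = sp \<or> t = sm then 0 else v t)" for x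
    have "b \<in> lattice (contracted_set S sp sm)"
      using v by (auto simp: b_def lattice_def contracted_set_def split: option.splits)
    moreover have "contr_emb sp sm b = v"
      using v by (auto simp: b_def contr_emb_def)
    ultimately show "v \<in> contracted_lattice S sp sm"
      unfolding contracted_lattice_def by blast
  qed
qed

locale coxeter_chain =
  fixes S :: "'a set" and M :: "'a \<Rightarrow> 'a \<Rightarrow> enat" and K :: "'a \<Rightarrow> 'a \<Rightarrow> int"
    and sp sm :: 'a and n :: nat and j :: "nat \<Rightarrow> 'a"
  assumes finite_S: "finite S"
    and coxM: "coxeter_matrix S M"
    and condK: "conditions_K S M K"
    and condB: "condition_B_seq S M sp sm n j"
begin

lemma chain_inj: "inj_on j {0..n}"
  and chain_in_S: "m \<le> n \<Longrightarrow> j m \<in> S"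
  and chain_nonempty: "1 \<le> n"
  and chain_start: "j 0 = sm" "j 1 = sp"
  using condB by (auto simp: condition_B_seq_def)

lemma chain_neq: "a \<le> n \<Longrightarrow> b \<le> n \<Longrightarrow> a \<noteq> b \<Longrightarrow> j a \<noteq> j b"
  using chain_inj by (auto simp: inj_on_def)

lemma M_chain_other:
  assumes "k \<in> {1..n}" "s \<in> S" "s \<noteq> j k" "s \<noteq> j (k - 1)" "k < n \<longrightarrow> s \<noteq> j (Suc k)"
  shows "M (j k) s = 2"
  using condB assms unfolding condition_B_seq_def by blast

lemma K_chain_other:
  assumes "k \<in> {1..n}" "s \<in> S" "s \<noteq> j k" "s \<noteq> j (k - 1)" "k < n \<longrightarrow> s \<noteq> j (Suc k)"
  shows "K (j k) s = 0"
proof -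
  have "M (j k) s = 2" by (rule M_chain_other[OF assms])
  then show ?thesis
    using condK chain_in_S[of k] assms(1,2) unfolding conditions_K_def by simp
qed

lemma M_chain_adjacent: "k < n \<Longrightarrow> M (j k) (j (Suc k)) = 3"
  using condB by (simp add: condition_B_seq_def)

lemma K_chain_adjacent:
  assumes "k < n" shows "K (j k) (j (Suc k)) = 1 \<and> K (j (Suc k)) (j k) = 1"
proof -
  have "j k \<in> S" "j (Suc k) \<in> S" and "M (j k) (j (Suc k)) = 3"
    using assms chain_in_S M_chain_adjacent by auto
  moreover from this have "M (j (Suc k)) (j k) = 3"
    using coxM by (simp add: coxeter_matrix_def)
  ultimately show ?thesis
    using K_eq_1_if_M_eq_3[OF coxM condK] by blast
qed

lemma sum_K_chain:
  assumes k: "k \<in> {1..n}"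
  shows "(\<Sum>u\<in>S. K (j k) u * b u)
    = b (j (k - 1)) - 2 * b (j k) + (if k < n then b (j (Suc k)) else 0)"
proof -
  define N where "N = (if k < n then {j (k - 1), j k, j (Suc k)} else {j (k - 1), j k})"
  have "N \<subseteq> S" unfolding N_def using chain_in_S k by auto
  moreover have "K (j k) u = 0" if "u \<in> S - N" for u
    using that k by (intro K_chain_other) (auto simp: N_def split: if_splits)
  ultimately have "(\<Sum>u\<in>S. K (j k) u * b u) = (\<Sum>u\<in>N. K (j k) u * b u)"
    by (intro sum.mono_neutral_right[OF finite_S]) auto
  moreover have "K (j k) (j (k - 1)) = 1"
    using K_chain_adjacent[of "k - 1"] k by auto
  moreover have "K (j k) (j k) = -2"
    using condK chain_in_S[of k] k unfolding conditions_K_def by simp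
  moreover have "j (k - 1) \<noteq> j k"
    using k by (intro chain_neq) auto
  moreover have "j (k - 1) \<noteq> j (Suc k)" "j k \<noteq> j (Suc k)" if "k < n"
    using that by (intro chain_neq; simp)+
  moreover have "K (j k) (j (Suc k)) = 1" if "k < n"
    using K_chain_adjacent[OF that] by simp
  ultimately show ?thesis
    unfolding N_def by (cases "k < n") simp_all
qed

definition chain_lower :: "nat \<Rightarrow> 'a \<Rightarrow> 'a" where
  "chain_lower k t = (if t \<in> j ` {k..n} then j (the_inv_into {0..n} j t - 1) else t)"

definition chain_raise :: "'a \<Rightarrow> 'a" where
  "chain_raise t = (if t \<in> j ` {0..<n} then j (Suc (the_inv_into {0..n} j t)) else t)"

lemma chain_lower_chain: "k \<le> m \<Longrightarrow> m \<le> n \<Longrightarrow> chain_lower k (j m) = j (m - 1)"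
  unfolding chain_lower_def using chain_inj by (auto simp: the_inv_into_f_f)

lemma chain_lower_below:
  assumes "m < k" "m \<le> n" shows "chain_lower k (j m) = j m"
proof -
  have "j m \<noteq> j i" if "i \<in> {k..n}" for i
    using assms that by (intro chain_neq) auto
  then have "j m \<notin> j ` {k..n}" by blast
  then show ?thesis unfolding chain_lower_def by simp
qed

lemma chain_lower_other: "t \<notin> j ` {k..n} \<Longrightarrow> chain_lower k t = t"
  unfolding chain_lower_def by simp

lemma chain_lower_Suc: "t \<noteq> j k \<Longrightarrow> chain_lower (Suc k) t = chain_lower k t"
proof -
  assume "t \<noteq> j k"
  then have "t \<in> j ` {Suc k..n} \<longleftrightarrow> t \<in> j ` {k..n}"
    by (auto, metis Suc_leI atLeastAtMost_iff image_eqI le_neq_implies_less)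
  then show ?thesis unfolding chain_lower_def by simp
qed

lemma chain_raise_chain: "m < n \<Longrightarrow> chain_raise (j m) = j (Suc m)"
  unfolding chain_raise_def using chain_inj by (auto simp: the_inv_into_f_f)

lemma chain_raise_other: "t \<notin> j ` {0..<n} \<Longrightarrow> chain_raise t = t"
  unfolding chain_raise_def by simp

lemma refl_sigma_chain_lower:
  assumes k: "k \<in> {1..n}" and an: "a (j n) = 0"
  shows "refl_sigma S K (j k) (\<lambda>t. a (chain_lower (Suc k) t)) = (\<lambda>t. a (chain_lower k t))"
proof -
  define b where "b t = a (chain_lower (Suc k) t)" for t
  have "b (j (k - 1)) = a (j (k - 1))" "b (j k) = a (j k)"
    using k chain_lower_below[of "k - 1" "Suc k"] chain_lower_below[of k "Suc k"]
    unfolding b_def by auto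
  moreover have "k < n \<Longrightarrow> b (j (Suc k)) = a (j k)"
    using chain_lower_chain[of "Suc k" "Suc k"] unfolding b_def by simp
  ultimately have "b (j k) + (\<Sum>u\<in>S. K (j k) u * b u) = a (j (k - 1))"
    using sum_K_chain[OF k, of b] an k by (cases "k < n") auto
  moreover have "chain_lower k (j k) = j (k - 1)"
    using chain_lower_chain k by simp
  moreover have "b t = a (chain_lower k t)" if "t \<noteq> j k" for t
    using chain_lower_Suc[OF that] unfolding b_def by simp
  ultimately have "refl_sigma S K (j k) b t = a (chain_lower k t)" for t
    unfolding refl_sigma_def by (cases "t = j k") simp_all
  then show ?thesis unfolding b_def by blast
qed

lemma sigma_word_chain_suffix:
  assumes an: "a (j n) = 0"
  shows "1 \<le> k \<Longrightarrow> k \<le> Suc n \<Longrightarrow>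
    sigma_word S K (map j [k..<Suc n]) a = (\<lambda>t. a (chain_lower k t))"
proof (induction "Suc n - k" arbitrary: k)
  case 0
  then show ?case by (simp add: sigma_word_def chain_lower_def)
next
  case (Suc d)
  then have k: "k \<in> {1..n}" by simp
  have "sigma_word S K (map j [Suc k..<Suc n]) a = (\<lambda>t. a (chain_lower (Suc k) t))"
    using Suc by simp
  moreover have "map j [k..<Suc n] = j k # map j [Suc k..<Suc n]"
    using k by (subst upt_conv_Cons) auto
  ultimately show ?case
    using refl_sigma_chain_lower[of k a, OF k an] by (simp add: sigma_word_def)
qed

abbreviation chain_word :: "'a list" where
  "chain_word \<equiv> map j [1..<Suc n]"

lemma sigma_word_chain_word:
  "a \<in> lattice (S - {j n}) \<Longrightarrow> sigma_word S K chain_word a = (\<lambda>t. a (chain_lower 1 t))"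
  using sigma_word_chain_suffix[of a 1] by (simp add: lattice_def)

lemma sigma1_eq:
  assumes a: "a \<in> lattice (S - {j n})"
  shows "sigma1 S K n j a = (\<lambda>t. a (chain_lower 1 t))"
proof
  fix t
  have "(if s \<in> j ` {0..n} then sigma_word S K chain_word (root s) t else root s t)
      = root s (chain_lower 1 t)" if s: "s \<in> S - {j n}" for s
  proof (cases "s \<in> j ` {0..n}")
    case True
    have "root s \<in> lattice (S - {j n})" using s by (auto simp: lattice_def root_def)
    then show ?thesis using True sigma_word_chain_word by simp
  next
    case False
    then show ?thesis
      by (cases "t \<in> j ` {1..n}") (auto simp: chain_lower_chain chain_lower_other root_def)
  qed
  then have "sigma1 S K n j a t = (\<Sum>s\<in>S - {j n}. a s * root s (chain_lower 1 t))"
    unfolding sigma1_def by (intro sum.cong) auto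
  also have "\<dots> = (\<Sum>s\<in>S - {j n}. if chain_lower 1 t = s then a s else 0)"
    by (intro sum.cong) (auto simp: root_def)
  also have "\<dots> = a (chain_lower 1 t)"
    using finite_S a by (simp add: sum.delta' lattice_def)
  finally show "sigma1 S K n j a t = a (chain_lower 1 t)" .
qed

lemma chain_lower_in_S:
  assumes t: "t \<in> S" shows "chain_lower 1 t \<in> S - {j n}"
proof (cases "t \<in> j ` {1..n}")
  case True
  then obtain m where m: "m \<in> {1..n}" "t = j m" by blast
  then have "m - 1 < n" by auto
  then have "j (m - 1) \<in> S - {j n}"
    using chain_in_S[of "m - 1"] chain_neq[of "m - 1" n] by auto
  then show ?thesis using m chain_lower_chain[of 1 m] by simp
next
  case False
  moreover have "j n \<in> j ` {1..n}" using chain_nonempty by auto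
  ultimately show ?thesis using t chain_lower_other by auto
qed

lemma chain_lower_notin_S: "t \<notin> S \<Longrightarrow> chain_lower 1 t = t"
  using chain_in_S by (intro chain_lower_other) auto

lemma chain_lower_raise:
  assumes s: "s \<in> S - {j n}" shows "chain_lower 1 (chain_raise s) = s"
proof (cases "s \<in> j ` {0..n}")
  case True
  then obtain m where "m \<le> n" "s = j m" by auto
  moreover from this have "m < n" using s by (auto simp: le_less)
  ultimately show ?thesis
    using chain_raise_chain[of m] chain_lower_chain[of 1 "Suc m"] by simp
next
  case False
  then have "s \<notin> j ` {0..<n}" "s \<notin> j ` {1..n}" by auto
  then show ?thesis by (simp add: chain_raise_other chain_lower_other)
qed

lemma chain_raise_lower:
  assumes t: "t \<noteq> j 0" shows "chain_raise (chain_lower 1 t) = t"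
proof (cases "t \<in> j ` {0..n}")
  case True
  then obtain m where "m \<le> n" "t = j m" by auto
  moreover from this have "m \<noteq> 0" using t by (intro notI) simp
  ultimately show ?thesis
    using chain_lower_chain[of 1 m] chain_raise_chain[of "m - 1"] by simp
next
  case False
  then have "t \<notin> j ` {0..<n}" "t \<notin> j ` {1..n}" by auto
  then show ?thesis by (simp add: chain_raise_other chain_lower_other)
qed

lemma contracted_lattice_chain: "contracted_lattice S sp sm = {v \<in> lattice S. v sp = v sm}"
proof (rule contracted_lattice_eq)
  show "sp \<in> S" "sm \<in> S"
    using chain_in_S[of 0] chain_in_S[of 1] chain_nonempty chain_start by auto
qed

lemma bij_betw_chain_lower:
  "bij_betw (\<lambda>a t. a (chain_lower 1 t)) (lattice (S - {j n})) (contracted_lattice S sp sm)"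
proof (rule bij_betw_byWitness[where f' = "\<lambda>v s. if s \<in> S - {j n} then v (chain_raise s) else 0"])
  show "\<forall>a\<in>lattice (S - {j n}).
      (\<lambda>s. if s \<in> S - {j n} then a (chain_lower 1 (chain_raise s)) else 0) = a"
    using chain_lower_raise by (auto simp: lattice_def fun_eq_iff)
next
  show "\<forall>v\<in>contracted_lattice S sp sm.
      (\<lambda>t. (\<lambda>s. if s \<in> S - {j n} then v (chain_raise s) else 0) (chain_lower 1 t)) = v"
  proof (intro ballI ext)
    fix v t assume "v \<in> contracted_lattice S sp sm"
    then have v: "v \<in> lattice S" "v sp = v sm" by (auto simp: contracted_lattice_chain)
    show "(\<lambda>s. if s \<in> S - {j n} then v (chain_raise s) else 0) (chain_lower 1 t) = v t"
    proof (cases "t \<in> S")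
      case True
      moreover have "chain_lower 1 (j 0) = j 0" using chain_lower_below[of 0 1] by simp
      ultimately show ?thesis
        using chain_lower_in_S chain_raise_lower[of t] chain_raise_chain[of 0] chain_nonempty
          chain_start v(2) by (cases "t = j 0") auto
    next
      case False
      then show ?thesis using chain_lower_notin_S[of t] v(1) by (simp add: lattice_def)
    qed
  qed
next
  have "(\<lambda>t. a (chain_lower 1 t)) \<in> lattice S" if "a \<in> lattice (S - {j n})" for a
    unfolding lattice_def
  proof (intro allI impI CollectI)
    fix t assume "t \<notin> S"
    then show "a (chain_lower 1 t) = 0" using that chain_lower_notin_S by (simp add: lattice_def)
  qed
  moreover have "a (chain_lower 1 sp) = a (chain_lower 1 sm)" for a
    using chain_lower_chain[of 1 1] chain_lower_below[of 0 1] chain_start chain_nonempty by simp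
  ultimately show "(\<lambda>a t. a (chain_lower 1 t)) ` lattice (S - {j n}) \<subseteq> contracted_lattice S sp sm"
    by (auto simp: contracted_lattice_chain)
qed (auto simp: lattice_def)

lemma set_chain_word_eq: "set chain_word = j ` {1..n}"
  by (simp del: upt_Suc add: atLeastLessThanSuc_atLeastAtMost)

lemma set_chain_word: "set chain_word \<subseteq> S"
  using chain_in_S by (auto simp: set_chain_word_eq)

lemma cox_eq_commute_chain:
  assumes s: "s \<in> S" and k: "k \<in> {1..n}"
    and "s \<noteq> j k" "s \<noteq> j (k - 1)" "k < n \<longrightarrow> s \<noteq> j (Suc k)"
  shows "cox_eq S M [s, j k] [j k, s]"
proof (rule cox_eq_commute[OF coxM s])
  show "j k \<in> S" using chain_in_S k by simp
  have "M (j k) s = 2" using M_chain_other[OF k s assms(3-5)] .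
  then show "M s (j k) = 2"
    using coxM s \<open>j k \<in> S\<close> by (simp add: coxeter_matrix_def)
qed

lemma cox_eq_commute_chain_nonadjacent:
  assumes "a \<le> n" "k \<in> {1..n}" "a \<noteq> k" "Suc a \<noteq> k" "Suc k \<noteq> a"
  shows "cox_eq S M [j a, j k] [j k, j a]"
proof (rule cox_eq_commute_chain)
  show "j a \<noteq> j k" "j a \<noteq> j (k - 1)"
    using assms by (intro chain_neq; auto)+
  show "k < n \<longrightarrow> j a \<noteq> j (Suc k)"
    using assms by (intro impI chain_neq) auto
qed (use assms chain_in_S in auto)

lemma conj_chain_word_other:
  assumes "s \<in> S" "s \<notin> j ` {0..n}"
  shows "cox_eq S M (chain_word @ [s] @ rev chain_word) [s]"
proof (rule cox_eq_conj_commuting[OF coxM set_chain_word], intro ballI)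
  fix t assume "t \<in> set chain_word"
  then obtain k where "k \<in> {1..n}" "t = j k" unfolding set_chain_word_eq by blast
  with assms show "cox_eq S M [s, t] [t, s]"
    by (auto intro!: cox_eq_commute_chain)
qed

lemma conj_chain_word_start:
  "cox_eq S M (chain_word @ [sm] @ rev chain_word) [sp, sm, sp]"
proof -
  define B where "B = map j [2..<Suc n]"
  have "[1..<Suc n] = 1 # [2..<Suc n]"
    using chain_nonempty by (simp add: upt_conv_Cons numeral_2_eq_2 del: upt_Suc)
  then have "chain_word = sp # B"
    using chain_start unfolding B_def by simp
  moreover have "cox_eq S M (B @ [j 0] @ rev B) [j 0]"
    by (rule cox_eq_conj_commuting[OF coxM])
      (auto simp: B_def intro!: chain_in_S cox_eq_commute_chain_nonadjacent)
  then have "cox_eq S M ([sp] @ (B @ [sm] @ rev B) @ [sp]) ([sp] @ [sm] @ [sp])"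
    using chain_start by (intro cox_eq_context) simp
  ultimately show ?thesis by simp
qed

lemma conj_chain_word_inner:
  assumes m: "0 < m" "m < n"
  shows "cox_eq S M (chain_word @ [j m] @ rev chain_word) [j (Suc m)]"
proof -
  define A where "A = map j [1..<m]"
  define B where "B = map j [Suc (Suc m)..<Suc n]"
  have "[1..<Suc n] = [1..<m] @ [m..<Suc n]"
    using upt_add_eq_append[of 1 m "Suc n - m"] m by (simp del: upt_Suc)
  also have "[m..<Suc n] = m # Suc m # [Suc (Suc m)..<Suc n]"
    using m by (simp del: upt_Suc add: upt_conv_Cons)
  finally have "chain_word = A @ [j m, j (Suc m)] @ B"
    unfolding A_def B_def by simp
  moreover have "cox_eq S M ((A @ [j m, j (Suc m)] @ B) @ [j m] @ rev (A @ [j m, j (Suc m)] @ B))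
      [j (Suc m)]"
    using m
    by (intro cox_eq_conj_braid[OF coxM] M_chain_adjacent chain_in_S)
      (auto simp: A_def B_def intro!: chain_in_S cox_eq_commute_chain_nonadjacent)
  ultimately show ?thesis by simp
qed

end

locale coxeter_chain_relabelling = coxeter_chain +
  fixes tau :: "'a \<Rightarrow> 'a option"
  assumes tau_start: "tau (j 0) = None"
    and tau_chain: "\<forall>l\<in>{1..<n}. tau (j l) = Some (j (Suc l))"
    and tau_other: "\<forall>s\<in>S - {j n}. s \<notin> j ` {0..n} \<longrightarrow> tau s = Some s"
begin

lemma phi_tau_letter:
  assumes s: "s \<in> S - {j n}"
  shows "cox_eq S M (phi_word sp sm [tau s]) (chain_word @ [s] @ rev chain_word)"
proof (cases "s \<in> j ` {0..n}")
  case False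
  then show ?thesis
    using s tau_other conj_chain_word_other[of s] by (simp add: phi_word_def cox_eq.sym)
next
  case True
  then obtain m where m: "m \<le> n" "s = j m" by auto
  with s have "m < n" by (auto simp: le_less)
  then consider "m = 0" | "0 < m" "m < n" by linarith
  then show ?thesis
  proof cases
    case 1
    then show ?thesis
      using m tau_start conj_chain_word_start chain_start by (simp add: phi_word_def cox_eq.sym)
  next
    case 2
    then show ?thesis
      using m tau_chain conj_chain_word_inner[of m] by (simp add: phi_word_def cox_eq.sym)
  qed
qed

lemma phi_tau_word:
  "x \<in> lists (S - {j n}) \<Longrightarrow>
    cox_eq S M (phi_word sp sm (map tau x)) (chain_word @ x @ rev chain_word)"
proof (induction x)
  case Nil
  then show ?case
    using cox_eq_append_rev[OF coxM set_chain_word] by (simp add: phi_word_def cox_eq.sym)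
next
  case (Cons s x)
  have "phi_word sp sm (map tau (s # x)) = phi_word sp sm [tau s] @ phi_word sp sm (map tau x)"
    by (simp add: phi_word_def)
  then have "cox_eq S M (phi_word sp sm (map tau (s # x)))
      ((chain_word @ [s] @ rev chain_word) @ (chain_word @ x @ rev chain_word))"
    using cox_eq_append[OF phi_tau_letter Cons.IH] Cons.prems by simp
  also have "cox_eq S M \<dots> (chain_word @ (s # x) @ rev chain_word)"
    by (rule cox_eq_contextI[OF cox_eq_rev_append[OF coxM set_chain_word],
          of _ "chain_word @ [s]" "x @ rev chain_word"]) auto
  finally show ?case .
qed

end

theorem mainTheorem4:
  fixes S :: "'a set" and M :: "'a \<Rightarrow> 'a \<Rightarrow> enat" and K :: "'a \<Rightarrow> 'a \<Rightarrow> int"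
    and sp sm :: 'a and n :: nat and j :: "nat \<Rightarrow> 'a" and tau :: "'a \<Rightarrow> 'a option"
  assumes finS: "finite S"
    and coxM: "coxeter_matrix S M"
    and finW: "finite (coxeter_group S M)"
    and condK: "conditions_K S M K"
    and condB: "condition_B_seq S M sp sm n j"
    and tau0: "tau (j 0) = None"
    and tau_chain: "\<forall>l\<in>{1..<n}. tau (j l) = Some (j (Suc l))"
    and tau_other: "\<forall>s\<in>S - {j n}. s \<notin> j ` {0..n} \<longrightarrow> tau s = Some s"
  shows "bij_betw (sigma1 S K n j) (lattice (S - {j n})) (contracted_lattice S sp sm)
     \<and> (\<forall>a\<in>lattice (S - {j n}). \<forall>x\<in>lists (S - {j n}).
          sigma1 S K n j a = sigma_word S K (map j [1..<Suc n]) a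
          \<and> cox_eq S M (phi_word sp sm (map tau x))
               (map j [1..<Suc n] @ x @ rev (map j [1..<Suc n])))"
proof -
  interpret coxeter_chain_relabelling S M K sp sm n j tau
    by unfold_locales (fact finS coxM condK condB tau0 tau_chain tau_other)+
  have "bij_betw (sigma1 S K n j) (lattice (S - {j n})) (contracted_lattice S sp sm)"
    using bij_betw_chain_lower by (rule bij_betw_cong[THEN iffD1, rotated]) (simp add: sigma1_eq)
  moreover have "sigma1 S K n j a = sigma_word S K chain_word a" if "a \<in> lattice (S - {j n})" for a
    unfolding sigma1_eq[OF that] sigma_word_chain_word[OF that] ..
  ultimately show ?thesis using phi_tau_word by blast
qed

end
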